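(* Let $n\ge 2$ and $k\neq 0$ be integers, $\zeta=2\pi/n$, $s_1>0$, $\nu>0$. Let $u_n:\mathbb{R}\to\mathbb{C}$ be $2\pi$-periodic, define $u_j(t)=e^{ij\zeta}u_n(t+jk\zeta)$ and $q_j(t)=e^{it\sqrt{s_1}/\nu}u_j(t)$ for all integers $j$, and let $\Omega=\frac{1}{n}\left(k\frac{\sqrt{s_1}}{\nu}-1\right)$. Suppose $\Omega=p/q$ with $p,q$ integers, $q\ge1$, and $\gcd(q,n)=1$. Let $q^*$ be an integer with $qq^*\equiv 1 \pmod n$ and set $1_n=q^*q$ (so $1_n\equiv 1\pmod n$). Then for every integer $j$ and all $t$, $$q_j(t)=q_n\big(t+j\,1_n k\zeta\big).$$ Moreover, writing $\frac{np+q}{kq}=\frac{\ell}{m}$ with $\ell,m$ relatively prime integers and $m\ge1$, the function $q_n$ is $2\pi m$-periodic.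
   Context: Setting: $n$ unit masses in a frame rotating with angular frequency $\sqrt{s_1}$, $s_1=\frac14\sum_{j=1}^{n-1}\frac{\sin^2(j\zeta/2)}{\sin^3(j\zeta/2)}$; a planar Lyapunov orbit of frequency $\nu$, rescaled to period $2\pi$, has the symmetry $u_j(t)=e^{ij\zeta}u_n(t+jk\zeta)$, and $q_j$ are the inertial-frame positions (time rescaled by $\nu$). Note that $\sqrt{s_1}/\nu=(n\Omega+1)/k$. *)

theory Defs
  imports "HOL-Analysis.Analysis" "HOL-Number_Theory.Cong"
begin

definition zeta :: "int \<Rightarrow> real" where
  "zeta n = 2 * pi / of_int n"

definition u_sym :: "(real \<Rightarrow> complex) \<Rightarrow> int \<Rightarrow> int \<Rightarrow> int \<Rightarrow> real \<Rightarrow> complex" where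
  "u_sym un n k j t = exp (\<i> * complex_of_real (of_int j * zeta n))
                       * un (t + of_int j * of_int k * zeta n)"

definition q_pos :: "(real \<Rightarrow> complex) \<Rightarrow> int \<Rightarrow> int \<Rightarrow> real \<Rightarrow> real \<Rightarrow> int \<Rightarrow> real \<Rightarrow> complex" where
  "q_pos un n k s1 \<nu> j t = exp (\<i> * complex_of_real (t * sqrt s1 / \<nu>)) * u_sym un n k j t"

end

theory Submission
  imports Defs
begin

text \<open>Write \<open>\<omega> = sqrt s1 / \<nu>\<close>. Then \<open>q_j(t) = exp(i(t\<omega> + j\<zeta>)) u_n(t + jk\<zeta>)\<close>,
  and since \<open>n\<zeta> = 2\<pi>\<close> this reduces to \<open>q_n(t) = exp(it\<omega>) u_n(t)\<close>. Shifting \<open>t\<close> by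
  \<open>j 1_n k\<zeta>\<close> moves the argument of \<open>u_n\<close> to \<open>t + jk\<zeta>\<close> up to \<open>j(1_n - 1)k\<zeta> \<in> 2\<pi>\<int>\<close>, and
  adds \<open>j 1_n \<zeta> k\<omega> = j q* (np + q) \<zeta>\<close> to the phase, which is \<open>j\<zeta>\<close> modulo \<open>2\<pi>\<close>.
  Periodicity: \<open>\<omega> = \<ell>/m\<close>, so \<open>m\<omega>\<close> is an integer and both factors of \<open>q_n\<close> are
  \<open>2\<pi>m\<close>-periodic.\<close>

lemma periodic_int_multiple:
  fixes f :: "real \<Rightarrow> 'a"
  assumes periodic: "\<And>t. f (t + c) = f t"
  shows "f (t + of_int z * c) = f t"
proof (induction z arbitrary: t rule: int_induct[where k = 0])
  case base
  then show ?case by simp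
next
  case (step1 i)
  have "f (t + of_int (i + 1) * c) = f ((t + of_int i * c) + c)"
    by (simp add: algebra_simps)
  then show ?case using periodic step1 by simp
next
  case (step2 i)
  have "f (t + of_int (i - 1) * c) = f ((t + of_int (i - 1) * c) + c)"
    using periodic by simp
  also have "\<dots> = f (t + of_int i * c)"
    by (simp add: algebra_simps)
  finally show ?case using step2 by simp
qed

lemma exp_i_shift_2pi_int:
  assumes "x = y + 2 * pi * of_int z"
  shows "exp (\<i> * complex_of_real x) = exp (\<i> * complex_of_real y)"
proof -
  have "\<i> * complex_of_real x = \<i> * complex_of_real y + \<i> * (of_int z * (of_real pi * 2))"
    by (simp add: assms algebra_simps)
  then show ?thesis by (simp only: exp_plus_2pin)
qed

lemma of_int_mult_zeta: "n \<noteq> 0 \<Longrightarrow> of_int n * zeta n = 2 * pi"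
  by (simp add: zeta_def)

lemma q_pos_eq:
  "q_pos un n k s1 \<nu> j t
     = exp (\<i> * complex_of_real (t * (sqrt s1 / \<nu>) + of_int j * zeta n))
       * un (t + of_int j * of_int k * zeta n)"
  by (simp add: q_pos_def u_sym_def exp_add[symmetric] algebra_simps)

lemma q_pos_last:
  assumes periodic: "\<And>t. un (t + 2 * pi) = un t" and "n \<noteq> 0"
  shows "q_pos un n k s1 \<nu> n t = exp (\<i> * complex_of_real (t * (sqrt s1 / \<nu>))) * un t"
proof -
  have nz: "of_int n * zeta n = 2 * pi"
    using \<open>n \<noteq> 0\<close> by (rule of_int_mult_zeta)
  have "exp (\<i> * complex_of_real (t * (sqrt s1 / \<nu>) + of_int n * zeta n))
      = exp (\<i> * complex_of_real (t * (sqrt s1 / \<nu>)))"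
    by (rule exp_i_shift_2pi_int[where z = 1]) (simp add: nz)
  moreover have "t + of_int n * of_int k * zeta n = t + of_int k * (2 * pi)"
    by (simp flip: nz)
  then have "un (t + of_int n * of_int k * zeta n) = un t"
    by (simp only: periodic_int_multiple[of un, OF periodic])
  ultimately show ?thesis by (simp add: q_pos_eq)
qed

lemma q_pos_symmetry:
  assumes periodic: "\<And>t. un (t + 2 * pi) = un t" and "n \<noteq> 0" and "q \<noteq> 0"
    and frequency: "of_int k * (sqrt s1 / \<nu>) = (of_int n * of_int p + of_int q) / of_int q"
    and bezout: "q * qs + n * r = 1"
  shows "q_pos un n k s1 \<nu> j t = q_pos un n k s1 \<nu> n (t + of_int j * of_int (qs * q) * of_int k * zeta n)"
proof -
  define \<omega> where "\<omega> = sqrt s1 / \<nu>"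
  define \<zeta> where "\<zeta> = zeta n"
  define s where "s = of_int j * of_int (qs * q) * of_int k * \<zeta>"
  have nz: "of_int n * \<zeta> = 2 * pi"
    unfolding \<zeta>_def using \<open>n \<noteq> 0\<close> by (rule of_int_mult_zeta)
  have unit: "real_of_int (qs * q) = 1 - of_int n * of_int r"
    using arg_cong[OF bezout, of real_of_int] by (simp add: algebra_simps)
  have k\<omega>: "of_int k * \<omega> * of_int q = of_int n * of_int p + of_int q"
    using frequency \<open>q \<noteq> 0\<close> by (simp add: \<omega>_def field_simps)
  have "(t + s) * \<omega> = t * \<omega> + of_int j * \<zeta> * (of_int qs * (of_int k * \<omega> * of_int q))"
    by (simp add: s_def algebra_simps)
  also have "\<dots> = t * \<omega> + of_int j * \<zeta> * (of_int qs * of_int n * of_int p + of_int (qs * q))"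
    by (simp only: k\<omega>) (simp add: algebra_simps)
  also have "\<dots> = t * \<omega> + of_int j * \<zeta> + of_int j * (of_int n * \<zeta>) * (of_int qs * of_int p - of_int r)"
    by (simp only: unit) (simp add: algebra_simps)
  also have "\<dots> = t * \<omega> + of_int j * \<zeta> + 2 * pi * of_int (j * qs * p - j * r)"
    by (simp only: nz) (simp add: algebra_simps)
  finally have phase: "(t + s) * \<omega> = t * \<omega> + of_int j * \<zeta> + 2 * pi * of_int (j * qs * p - j * r)" .
  have "s = of_int j * of_int k * \<zeta> - of_int (j * k * r) * (of_int n * \<zeta>)"
    unfolding s_def unit by (simp add: algebra_simps)
  then have "t + s = (t + of_int j * of_int k * \<zeta>) + of_int (- j * k * r) * (2 * pi)"
    by (simp add: nz)
  then have shift: "un (t + s) = un (t + of_int j * of_int k * \<zeta>)"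
    by (simp only: periodic_int_multiple[of un, OF periodic])
  have "q_pos un n k s1 \<nu> n (t + s) = exp (\<i> * complex_of_real ((t + s) * \<omega>)) * un (t + s)"
    unfolding \<omega>_def by (rule q_pos_last[of un, OF periodic \<open>n \<noteq> 0\<close>])
  also have "\<dots> = exp (\<i> * complex_of_real (t * \<omega> + of_int j * \<zeta>)) * un (t + of_int j * of_int k * \<zeta>)"
    by (simp only: exp_i_shift_2pi_int[OF phase] shift)
  also have "\<dots> = q_pos un n k s1 \<nu> j t"
    by (simp only: q_pos_eq \<omega>_def \<zeta>_def)
  finally show ?thesis
    by (simp only: s_def \<zeta>_def)
qed

lemma q_pos_last_periodic:
  assumes periodic: "\<And>t. un (t + 2 * pi) = un t" and "n \<noteq> 0"
    and integral: "of_int m * (sqrt s1 / \<nu>) = of_int l"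
  shows "q_pos un n k s1 \<nu> n (t + 2 * pi * of_int m) = q_pos un n k s1 \<nu> n t"
proof -
  have "exp (\<i> * complex_of_real ((t + 2 * pi * of_int m) * (sqrt s1 / \<nu>)))
      = exp (\<i> * complex_of_real (t * (sqrt s1 / \<nu>)))"
    by (rule exp_i_shift_2pi_int[where z = l]) (simp add: algebra_simps flip: integral)
  moreover have "un (t + 2 * pi * of_int m) = un t"
    using periodic_int_multiple[of un, OF periodic, of t m] by (simp add: mult.commute)
  ultimately show ?thesis
    by (simp only: q_pos_last[of un, OF periodic \<open>n \<noteq> 0\<close>])
qed

theorem proposition1:
  fixes n k p q qs :: int and s1 \<nu> :: real and un :: "real \<Rightarrow> complex"
  assumes "n \<ge> 2" and "k \<noteq> 0" and "s1 > 0" and "\<nu> > 0"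
    and "\<And>t. un (t + 2 * pi) = un t"
    and "(1 / of_int n) * (of_int k * sqrt s1 / \<nu> - 1) = of_int p / of_int q"
    and "q \<ge> 1" and "gcd q n = 1"
    and "[q * qs = 1] (mod n)"
  shows "(\<forall>j t. q_pos un n k s1 \<nu> j t
                 = q_pos un n k s1 \<nu> n (t + of_int j * of_int (qs * q) * of_int k * zeta n))
       \<and> (\<forall>l m :: int. coprime l m \<and> m \<ge> 1
              \<and> of_int (n * p + q) / of_int (k * q) = (of_int l / of_int m :: real)
            \<longrightarrow> (\<forall>t. q_pos un n k s1 \<nu> n (t + 2 * pi * of_int m) = q_pos un n k s1 \<nu> n t))"
proof -
  have "n \<noteq> 0" "q \<noteq> 0" using assms(1,7) by auto
  have frequency: "of_int k * (sqrt s1 / \<nu>) = (of_int n * of_int p + of_int q) / of_int q"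
    using assms(6) \<open>n \<noteq> 0\<close> \<open>q \<noteq> 0\<close> by (simp add: field_simps)
  obtain r where bezout: "q * qs + n * r = 1"
    using assms(9) by (auto simp: cong_iff_lin)
  have "sqrt s1 / \<nu> = of_int (n * p + q) / of_int (k * q)"
    using frequency \<open>q \<noteq> 0\<close> assms(2) by (simp add: field_simps)
  then have "of_int m * (sqrt s1 / \<nu>) = of_int l"
    if "of_int (n * p + q) / of_int (k * q) = (of_int l / of_int m :: real)" "m \<ge> 1" for l m
    using that by simp
  then show ?thesis
    using q_pos_symmetry[of un, OF assms(5) \<open>n \<noteq> 0\<close> \<open>q \<noteq> 0\<close> frequency bezout]
      q_pos_last_periodic[of un, OF assms(5) \<open>n \<noteq> 0\<close>] by blast
qed

end
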